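(* Let $\mathcal{H}_A\cong\mathbb{C}^{d_A}$, $\mathcal{H}_B\cong\mathbb{C}^{d_B}$ with $d_A,d_B\ge 2$ and computational bases $\{|a\rangle\}$, $\{|b\rangle\}$. There is no operator of the form $O=\sum_{\vec a\in\mathbb{Z}_{d_A}^3,\vec b\in\mathbb{Z}_{d_B}^3}O(\vec a,\vec b)\,|\vec a\rangle\langle\vec a|\otimes|\vec b\rangle\langle\vec b|$ (with complex coefficients $O(\vec a,\vec b)$) such that $(\Phi^3_A\otimes\Phi^3_B)(O)=M_{neg}$, where $M_{neg}=\tfrac12\big(W^A_{(1,2,3)}\otimes W^B_{(1,3,2)}+W^A_{(1,3,2)}\otimes W^B_{(1,2,3)}\big)$.
   Context: For $\mathcal{H}\cong\mathbb{C}^d$, $\Phi^3(X)=\int_{\mathrm{Haar}}dU\,U^{\otimes3}XU^{\dagger\otimes3}$ is the 3-fold Haar twirl on $\mathcal{H}^{\otimes3}$; $\Phi^3_A\otimes\Phi^3_B$ is independent twirling of the $A$ and $B$ parts of $(\mathcal{H}_A\otimes\mathcal{H}_B)^{\otimes3}\cong\mathcal{H}_A^{\otimes3}\otimes\mathcal{H}_B^{\otimes3}$. $W_\pi$ ($\pi\in S_3$) is the operator permuting tensor factors, $W_{(1,2,3)}|a_1,a_2,a_3\rangle=|a_2,a_3,a_1\rangle$ and $W_{(1,3,2)}=W_{(1,2,3)}^{-1}$; superscripts indicate the system. $|\vec a\rangle=|a_1\rangle|a_2\rangle|a_3\rangle$. *)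

theory Defs
  imports "HOL-Probability.Probability"
begin

text \<open>Matrices on C^d are represented as complex^'n^'n with CARD('n) = d
  (the computational basis is indexed by the finite type 'n).\<close>

definition adjoint_mat :: "complex^'n^'n \<Rightarrow> complex^'n^'n" where
  "adjoint_mat U = (\<chi> i j. cnj (U $ j $ i))"

definition unitary_mat :: "complex^'n^'n \<Rightarrow> bool" where
  "unitary_mat U \<longleftrightarrow> U ** adjoint_mat U = mat 1 \<and> adjoint_mat U ** U = mat 1"

text \<open>Haar measure on U(d): a Borel probability measure concentrated on the
  unitary group and invariant under left multiplication by unitaries
  (this characterizes the Haar measure uniquely).\<close>

definition haar_unitary :: "(complex^'n^'n) measure \<Rightarrow> bool" where
  "haar_unitary \<mu> \<longleftrightarrow>
     sets \<mu> = sets borel \<and> prob_space \<mu> \<and>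
     emeasure \<mu> {U. unitary_mat U} = 1 \<and>
     (\<forall>W. unitary_mat W \<longrightarrow> distr \<mu> borel (\<lambda>U. W ** U) = \<mu>)"

text \<open>Matrix entries of U^{\<otimes>3} in the product basis |a1 a2 a3>.\<close>

definition U3 :: "complex^'n^'n \<Rightarrow> ('n \<times> 'n \<times> 'n) \<Rightarrow> ('n \<times> 'n \<times> 'n) \<Rightarrow> complex" where
  "U3 U x y = (case x of (a1, a2, a3) \<Rightarrow> case y of (b1, b2, b3) \<Rightarrow>
                 U $ a1 $ b1 * U $ a2 $ b2 * U $ a3 $ b3)"

type_synonym ('a, 'b) idx3 = "('a \<times> 'a \<times> 'a) \<times> ('b \<times> 'b \<times> 'b)"

text \<open>Operators on (H_A \<otimes> H_B)^{\<otimes>3} \<cong> H_A^{\<otimes>3} \<otimes> H_B^{\<otimes>3}, as matrices indexed by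
  pairs (a-triple, b-triple).\<close>

definition twirl3_AB ::
  "(complex^'a^'a) measure \<Rightarrow> (complex^'b^'b) measure \<Rightarrow>
   (('a,'b) idx3 \<Rightarrow> ('a,'b) idx3 \<Rightarrow> complex) \<Rightarrow>
   (('a,'b) idx3 \<Rightarrow> ('a,'b) idx3 \<Rightarrow> complex)" where
  "twirl3_AB \<mu>A \<mu>B X = (\<lambda>x y.
     integral\<^sup>L (\<mu>A \<Otimes>\<^sub>M \<mu>B) (\<lambda>(U, V).
       \<Sum>p\<in>UNIV. \<Sum>q\<in>UNIV.
         (U3 U (fst x) (fst p) * U3 V (snd x) (snd p)) * X p q *
         cnj (U3 U (fst y) (fst q) * U3 V (snd y) (snd q))))"

definition W123 :: "('n \<times> 'n \<times> 'n) \<Rightarrow> ('n \<times> 'n \<times> 'n) \<Rightarrow> complex" where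
  "W123 x y = (case y of (a1, a2, a3) \<Rightarrow> if x = (a2, a3, a1) then 1 else 0)"

definition W132 :: "('n \<times> 'n \<times> 'n) \<Rightarrow> ('n \<times> 'n \<times> 'n) \<Rightarrow> complex" where
  "W132 x y = (case y of (a1, a2, a3) \<Rightarrow> if x = (a3, a1, a2) then 1 else 0)"

definition tensor_op ::
  "('a \<Rightarrow> 'a \<Rightarrow> complex) \<Rightarrow> ('b \<Rightarrow> 'b \<Rightarrow> complex) \<Rightarrow> ('a \<times> 'b \<Rightarrow> 'a \<times> 'b \<Rightarrow> complex)" where
  "tensor_op P Q x y = P (fst x) (fst y) * Q (snd x) (snd y)"

definition M_neg :: "('a,'b) idx3 \<Rightarrow> ('a,'b) idx3 \<Rightarrow> complex" where
  "M_neg x y = (1/2) * (tensor_op W123 W132 x y + tensor_op W132 W123 x y)"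

definition diag_op :: "('i \<Rightarrow> complex) \<Rightarrow> 'i \<Rightarrow> 'i \<Rightarrow> complex" where
  "diag_op f x y = (if x = y then f x else 0)"

end

theory Submission
  imports Defs
begin

(* With the bilinear pairing <Y, X> = \<Sum>x y. Y x y * X x y, conjugation X \<mapsto> G X G\<^sup>\<dagger> is dual to
   Y \<mapsto> G\<^sup>T Y (cnj G).  For G = U\<^sup>\<otimes>\<^sup>3 \<otimes> V\<^sup>\<otimes>\<^sup>3 this dual action fixes every W\<^sup>A_\<pi> \<otimes> W\<^sup>B_\<sigma>, since U\<^sup>\<otimes>\<^sup>3
   commutes with permutations of the tensor factors; averaging over U and V gives
   <W\<^sup>A_\<pi> \<otimes> W\<^sup>B_\<sigma>, \<Phi>(O)> = <W\<^sup>A_\<pi> \<otimes> W\<^sup>B_\<sigma>, O> for every O.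
   Now W\<^sup>A_(1,2,3) \<otimes> W\<^sup>B_(1,3,2) and W\<^sup>A_(1,2,3) \<otimes> W\<^sup>B_(1,2,3) have the same diagonal, so they pair
   equally with every diagonal O.  Paired with M_neg, however, they give (d_A\<^sup>3 d_B\<^sup>3 + d_A d_B)/2
   and (d_A\<^sup>3 d_B + d_A d_B\<^sup>3)/2, which differ by (d_A\<^sup>3 - d_A)(d_B\<^sup>3 - d_B)/2 > 0. *)

lemma sum_UNIV_pair:
  "(\<Sum>z\<in>(UNIV :: ('a::finite \<times> 'b::finite) set). f z) = (\<Sum>x\<in>UNIV. \<Sum>y\<in>UNIV. f (x, y))"
  by (simp add: sum.cartesian_product)

lemma sum_UNIV_triple:
  "(\<Sum>z\<in>(UNIV :: ('a::finite \<times> 'a \<times> 'a) set). f z) = (\<Sum>a1\<in>UNIV. \<Sum>a2\<in>UNIV. \<Sum>a3\<in>UNIV. f (a1, a2, a3))"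
  by (simp add: sum_UNIV_pair)

lemma sum_UNIV_triple_mult:
  "(\<Sum>a1\<in>UNIV. \<Sum>a2\<in>UNIV. \<Sum>a3\<in>UNIV. f a1 * g a2 * h a3 :: 'b::comm_semiring_1)
     = sum f UNIV * sum g UNIV * sum h UNIV"
  by (simp only: sum_distrib_left[symmetric] sum_distrib_right[symmetric])

lemma sum_product_separable:
  "(\<Sum>x1\<in>A. \<Sum>x2\<in>B. \<Sum>y1\<in>C. \<Sum>y2\<in>D. F x1 y1 * G x2 y2 :: 'c::comm_semiring_1)
     = (\<Sum>x1\<in>A. \<Sum>y1\<in>C. F x1 y1) * (\<Sum>x2\<in>B. \<Sum>y2\<in>D. G x2 y2)"
proof -
  have "(\<Sum>x1\<in>A. \<Sum>x2\<in>B. \<Sum>y1\<in>C. \<Sum>y2\<in>D. F x1 y1 * G x2 y2)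
      = (\<Sum>x1\<in>A. \<Sum>y1\<in>C. \<Sum>x2\<in>B. \<Sum>y2\<in>D. F x1 y1 * G x2 y2)"
    by (rule sum.cong[OF refl], rule sum.swap)
  also have "\<dots> = (\<Sum>x1\<in>A. \<Sum>y1\<in>C. F x1 y1 * (\<Sum>x2\<in>B. \<Sum>y2\<in>D. G x2 y2))"
    by (simp only: sum_distrib_left)
  also have "\<dots> = (\<Sum>x1\<in>A. \<Sum>y1\<in>C. F x1 y1) * (\<Sum>x2\<in>B. \<Sum>y2\<in>D. G x2 y2)"
    by (simp only: sum_distrib_right)
  finally show ?thesis .
qed

lemma unitary_mat_columns_orthonormal:
  assumes "unitary_mat U"
  shows "(\<Sum>a\<in>UNIV. U $ a $ r * cnj (U $ a $ q)) = (if r = q then 1 else 0)"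
proof -
  have "(\<Sum>a\<in>UNIV. cnj (U $ a $ q) * U $ a $ r) = (adjoint_mat U ** U) $ q $ r"
    by (simp add: matrix_matrix_mult_def adjoint_mat_def)
  also have "\<dots> = (if r = q then 1 else 0)"
    using assms by (simp add: unitary_mat_def mat_def)
  finally show ?thesis
    by (simp add: mult.commute)
qed

lemma unitary_mat_entry_norm_le_1:
  assumes "unitary_mat U"
  shows "norm (U $ i $ j) \<le> 1"
proof -
  have "complex_of_real (\<Sum>a\<in>UNIV. (norm (U $ a $ j))\<^sup>2) = (\<Sum>a\<in>UNIV. U $ a $ j * cnj (U $ a $ j))"
    by (simp only: of_real_sum complex_norm_square)
  also have "\<dots> = 1"
    using unitary_mat_columns_orthonormal[OF assms, of j j] by simp
  finally have "(\<Sum>a\<in>UNIV. (norm (U $ a $ j))\<^sup>2) = 1"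
    using of_real_eq_1_iff by blast
  moreover have "(norm (U $ i $ j))\<^sup>2 \<le> (\<Sum>a\<in>UNIV. (norm (U $ a $ j))\<^sup>2)"
    by (rule member_le_sum) auto
  ultimately show ?thesis
    by (simp add: power_le_one_iff abs_square_le_1)
qed

lemma U3_eq:
  "U3 U x p = U $ fst x $ fst p * U $ fst (snd x) $ fst (snd p) * U $ snd (snd x) $ snd (snd p)"
  by (cases x; cases p) (simp add: U3_def)

lemma U3_norm_le_1:
  assumes "unitary_mat U"
  shows "norm (U3 U x p) \<le> 1"
  unfolding U3_eq norm_mult
  by (intro mult_le_one unitary_mat_entry_norm_le_1[OF assms] mult_nonneg_nonneg norm_ge_zero)

lemma U3_columns_orthonormal:
  assumes "unitary_mat U"
  shows "(\<Sum>x\<in>UNIV. U3 U x p * cnj (U3 U x q)) = (if p = q then 1 else 0)"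
proof -
  obtain p1 p2 p3 q1 q2 q3 where pq: "p = (p1, p2, p3)" "q = (q1, q2, q3)"
    by (cases p; cases q) auto
  have "(\<Sum>x\<in>UNIV. U3 U x p * cnj (U3 U x q))
      = (\<Sum>a1\<in>UNIV. \<Sum>a2\<in>UNIV. \<Sum>a3\<in>UNIV.
          (U $ a1 $ p1 * cnj (U $ a1 $ q1)) * (U $ a2 $ p2 * cnj (U $ a2 $ q2)) *
          (U $ a3 $ p3 * cnj (U $ a3 $ q3)))"
    by (simp add: sum_UNIV_triple U3_def pq ac_simps)
  then show ?thesis
    unfolding sum_UNIV_triple_mult unitary_mat_columns_orthonormal[OF assms] by (simp add: pq)
qed

definition rot3 :: "'a \<times> 'a \<times> 'a \<Rightarrow> 'a \<times> 'a \<times> 'a" where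
  "rot3 = (\<lambda>(a1, a2, a3). (a2, a3, a1))"

lemma rot3_simp [simp]: "rot3 (a1, a2, a3) = (a2, a3, a1)"
  by (simp add: rot3_def)

lemma bij_rot3: "bij rot3"
  by (rule bij_betw_byWitness[where f' = "\<lambda>(a1, a2, a3). (a3, a1, a2)"]) auto

lemma U3_rot3 [simp]: "U3 U (rot3 x) (rot3 p) = U3 U x p"
  by (cases x; cases p) (simp add: U3_def ac_simps)

definition perm_op :: "('i \<Rightarrow> 'i) \<Rightarrow> 'i \<Rightarrow> 'i \<Rightarrow> complex" where
  "perm_op f x y = of_bool (x = f y)"

lemma W123_eq_perm_op: "W123 = perm_op rot3"
  by (auto simp: fun_eq_iff W123_def perm_op_def)

lemma W132_eq_perm_op: "W132 = perm_op (rot3 \<circ> rot3)"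
  by (auto simp: fun_eq_iff W132_def perm_op_def)

definition pairing :: "('i::finite \<Rightarrow> 'i \<Rightarrow> complex) \<Rightarrow> ('i \<Rightarrow> 'i \<Rightarrow> complex) \<Rightarrow> complex" where
  "pairing Y X = (\<Sum>x\<in>UNIV. \<Sum>y\<in>UNIV. Y x y * X x y)"

definition sandwich ::
  "('i::finite \<Rightarrow> 'i \<Rightarrow> complex) \<Rightarrow> ('i \<Rightarrow> 'i \<Rightarrow> complex) \<Rightarrow> 'i \<Rightarrow> 'i \<Rightarrow> complex" where
  "sandwich G X x y = (\<Sum>p\<in>UNIV. \<Sum>q\<in>UNIV. G x p * X p q * cnj (G y q))"

definition dual_sandwich ::
  "('i::finite \<Rightarrow> 'i \<Rightarrow> complex) \<Rightarrow> ('i \<Rightarrow> 'i \<Rightarrow> complex) \<Rightarrow> 'i \<Rightarrow> 'i \<Rightarrow> complex" where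
  "dual_sandwich G Y p q = (\<Sum>x\<in>UNIV. \<Sum>y\<in>UNIV. Y x y * G x p * cnj (G y q))"

lemma pairing_sandwich: "pairing Y (sandwich G X) = pairing (dual_sandwich G Y) X"
proof -
  have "pairing Y (sandwich G X)
      = (\<Sum>x\<in>UNIV. \<Sum>y\<in>UNIV. \<Sum>p\<in>UNIV. \<Sum>q\<in>UNIV. Y x y * G x p * cnj (G y q) * X p q)"
    by (simp add: pairing_def sandwich_def sum_distrib_left ac_simps)
  also have "\<dots> = (\<Sum>x\<in>UNIV. \<Sum>p\<in>UNIV. \<Sum>y\<in>UNIV. \<Sum>q\<in>UNIV. Y x y * G x p * cnj (G y q) * X p q)"
    by (rule sum.cong[OF refl], rule sum.swap)
  also have "\<dots> = (\<Sum>x\<in>UNIV. \<Sum>p\<in>UNIV. \<Sum>q\<in>UNIV. \<Sum>y\<in>UNIV. Y x y * G x p * cnj (G y q) * X p q)"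
    by (rule sum.cong[OF refl], rule sum.cong[OF refl], rule sum.swap)
  also have "\<dots> = (\<Sum>p\<in>UNIV. \<Sum>x\<in>UNIV. \<Sum>q\<in>UNIV. \<Sum>y\<in>UNIV. Y x y * G x p * cnj (G y q) * X p q)"
    by (rule sum.swap)
  also have "\<dots> = (\<Sum>p\<in>UNIV. \<Sum>q\<in>UNIV. \<Sum>x\<in>UNIV. \<Sum>y\<in>UNIV. Y x y * G x p * cnj (G y q) * X p q)"
    by (rule sum.cong[OF refl], rule sum.swap)
  also have "\<dots> = pairing (dual_sandwich G Y) X"
    by (simp add: pairing_def dual_sandwich_def sum_distrib_right)
  finally show ?thesis .
qed

lemma dual_sandwich_tensor_op:
  "dual_sandwich (tensor_op G H) (tensor_op P Q) = tensor_op (dual_sandwich G P) (dual_sandwich H Q)"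
proof (intro ext)
  fix p q
  have "dual_sandwich (tensor_op G H) (tensor_op P Q) p q
      = (\<Sum>x1\<in>UNIV. \<Sum>x2\<in>UNIV. \<Sum>y1\<in>UNIV. \<Sum>y2\<in>UNIV.
          (P x1 y1 * G x1 (fst p) * cnj (G y1 (fst q))) * (Q x2 y2 * H x2 (snd p) * cnj (H y2 (snd q))))"
    by (simp add: dual_sandwich_def tensor_op_def sum_UNIV_pair ac_simps)
  then show "dual_sandwich (tensor_op G H) (tensor_op P Q) p q = tensor_op (dual_sandwich G P) (dual_sandwich H Q) p q"
    by (simp add: sum_product_separable dual_sandwich_def tensor_op_def)
qed

lemma pairing_tensor_op: "pairing (tensor_op P Q) (tensor_op P' Q') = pairing P P' * pairing Q Q'"
proof -
  have "pairing (tensor_op P Q) (tensor_op P' Q')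
      = (\<Sum>x1\<in>UNIV. \<Sum>x2\<in>UNIV. \<Sum>y1\<in>UNIV. \<Sum>y2\<in>UNIV. (P x1 y1 * P' x1 y1) * (Q x2 y2 * Q' x2 y2))"
    by (simp add: pairing_def tensor_op_def sum_UNIV_pair ac_simps)
  then show ?thesis
    by (simp add: sum_product_separable pairing_def)
qed

lemma pairing_diag_op: "pairing Y (diag_op c) = (\<Sum>x\<in>UNIV. Y x x * c x)"
proof -
  have "Y x y * diag_op c x y = (if y = x then Y x x * c x else 0)" for x y
    by (simp add: diag_op_def)
  then show ?thesis
    by (simp add: pairing_def)
qed

lemma dual_sandwich_U3_perm_op:
  assumes "unitary_mat U" "bij f" "\<And>x p. U3 U (f x) (f p) = U3 U x p"
  shows "dual_sandwich (U3 U) (perm_op f) = perm_op f"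
proof (intro ext)
  fix p q
  have "dual_sandwich (U3 U) (perm_op f) p q = (\<Sum>y\<in>UNIV. U3 U (f y) p * cnj (U3 U y q))"
    unfolding dual_sandwich_def perm_op_def by (subst sum.swap) (simp add: mult.assoc)
  also have "\<dots> = (\<Sum>y\<in>UNIV. U3 U y (inv f p) * cnj (U3 U y q))"
    using assms(3)[of _ "inv f p"] bij_inv_eq_iff[OF assms(2)] by metis
  also have "\<dots> = perm_op f p q"
    using bij_inv_eq_iff[OF assms(2), of q p]
    by (auto simp: U3_columns_orthonormal[OF assms(1)] perm_op_def)
  finally show "dual_sandwich (U3 U) (perm_op f) p q = perm_op f p q" .
qed

lemma pairing_perm_op: "pairing (perm_op f) (perm_op g) = of_nat (card {y. f y = g y})"
proof -
  have "of_bool (x = f y) * of_bool (x = g y) = (if x = f y then of_bool (f y = g y) else (0::complex))"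
    for x y
    by simp
  then have "pairing (perm_op f) (perm_op g) = (\<Sum>y\<in>UNIV. of_bool (f y = g y))"
    unfolding pairing_def perm_op_def by (subst sum.swap) simp
  then show ?thesis
    by simp
qed

lemma dual_sandwich_U3_W123:
  assumes "unitary_mat U"
  shows "dual_sandwich (U3 U) W123 = W123"
  unfolding W123_eq_perm_op using assms bij_rot3 by (rule dual_sandwich_U3_perm_op) simp

lemma dual_sandwich_U3_W132:
  assumes "unitary_mat U"
  shows "dual_sandwich (U3 U) W132 = W132"
  unfolding W132_eq_perm_op using assms bij_comp[OF bij_rot3 bij_rot3]
  by (rule dual_sandwich_U3_perm_op) simp

lemma pairing_W_same:
  shows "pairing (W123 :: 'a \<times> 'a \<times> 'a \<Rightarrow> _) W123 = of_nat (CARD('a::finite) ^ 3)"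
    and "pairing (W132 :: 'a \<times> 'a \<times> 'a \<Rightarrow> _) W132 = of_nat (CARD('a) ^ 3)"
  by (simp_all add: W123_eq_perm_op W132_eq_perm_op pairing_perm_op power3_eq_cube)

lemma pairing_W_cross:
  shows "pairing (W123 :: 'a \<times> 'a \<times> 'a \<Rightarrow> _) W132 = of_nat CARD('a::finite)"
    and "pairing (W132 :: 'a \<times> 'a \<times> 'a \<Rightarrow> _) W123 = of_nat CARD('a)"
proof -
  have "{y. rot3 y = (rot3 \<circ> rot3) y} = range (\<lambda>a :: 'a. (a, a, a))"
    and "{y. (rot3 \<circ> rot3) y = rot3 y} = range (\<lambda>a :: 'a. (a, a, a))"
    by (auto simp: rot3_def)
  moreover have "card (range (\<lambda>a :: 'a. (a, a, a))) = CARD('a)"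
    by (rule card_image) (simp add: inj_on_def)
  ultimately show "pairing (W123 :: 'a \<times> 'a \<times> 'a \<Rightarrow> _) W132 = of_nat CARD('a)"
    and "pairing (W132 :: 'a \<times> 'a \<times> 'a \<Rightarrow> _) W123 = of_nat CARD('a)"
    by (simp_all add: W123_eq_perm_op W132_eq_perm_op pairing_perm_op)
qed

lemma W132_diag_eq_W123_diag: "W132 x x = W123 x x"
proof -
  obtain a1 a2 a3 where x: "x = (a1, a2, a3)"
    by (cases x) auto
  have "(a1 = a3 \<and> a2 = a1 \<and> a3 = a2) \<longleftrightarrow> (a1 = a2 \<and> a2 = a3 \<and> a3 = a1)"
    by blast
  then show ?thesis
    by (simp only: x W123_def W132_def prod.case prod.inject)
qed

lemma pairing_M_neg:
  "pairing (tensor_op P Q) M_neg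
     = (pairing P W123 * pairing Q W132 + pairing P W132 * pairing Q W123) / 2"
proof -
  have "tensor_op P Q x y * M_neg x y
      = (tensor_op P Q x y * tensor_op W123 W132 x y + tensor_op P Q x y * tensor_op W132 W123 x y) / 2"
    for x y
    by (simp add: M_neg_def distrib_left)
  then have "pairing (tensor_op P Q) M_neg
      = (pairing (tensor_op P Q) (tensor_op W123 W132) + pairing (tensor_op P Q) (tensor_op W132 W123)) / 2"
    unfolding pairing_def by (simp only: sum_divide_distrib[symmetric] sum.distrib)
  then show ?thesis
    by (simp only: pairing_tensor_op)
qed

lemma less_cube:
  fixes m :: nat
  assumes "2 \<le> m"
  shows "m < m ^ 3"
proof -
  have "1 < m * m"
    using mult_le_mono[OF assms assms] by simp
  then have "m * 1 < m * (m * m)"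
    using assms by (intro mult_strict_left_mono) simp_all
  then show ?thesis
    by (simp add: power3_eq_cube)
qed

lemma cube_cross_neq:
  fixes m n :: nat
  assumes "2 \<le> m" "2 \<le> n"
  shows "m ^ 3 * n ^ 3 + m * n \<noteq> m ^ 3 * n + m * n ^ 3"
proof
  assume "m ^ 3 * n ^ 3 + m * n = m ^ 3 * n + m * n ^ 3"
  then have "int (m ^ 3 * n ^ 3 + m * n) = int (m ^ 3 * n + m * n ^ 3)"
    by (rule arg_cong)
  then have "(int m ^ 3 - int m) * (int n ^ 3 - int n) = 0"
    by (simp add: algebra_simps)
  then have "m ^ 3 = m \<or> n ^ 3 = n"
    by simp
  then show False
    using less_cube[OF assms(1)] less_cube[OF assms(2)] by auto
qed

lemma AE_pair_measure_fst_snd: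
  assumes "sigma_finite_measure M2" "AE x in M1. P x" "AE y in M2. Q y"
  shows "AE z in M1 \<Otimes>\<^sub>M M2. P (fst z) \<and> Q (snd z)"
proof -
  obtain N1 where N1: "{x \<in> space M1. \<not> P x} \<subseteq> N1" "N1 \<in> null_sets M1"
    using assms(2) by (auto elim!: AE_E)
  obtain N2 where N2: "{y \<in> space M2. \<not> Q y} \<subseteq> N2" "N2 \<in> null_sets M2"
    using assms(3) by (auto elim!: AE_E)
  show ?thesis
  proof (rule AE_I')
    show "N1 \<times> space M2 \<union> space M1 \<times> N2 \<in> null_sets (M1 \<Otimes>\<^sub>M M2)"
      using N1(2) N2(2) sigma_finite_measure.times_in_null_sets1[OF assms(1)]
        sigma_finite_measure.times_in_null_sets2[OF assms(1)] by blast
    show "{z \<in> space (M1 \<Otimes>\<^sub>M M2). \<not> (P (fst z) \<and> Q (snd z))} \<subseteq> N1 \<times> space M2 \<union> space M1 \<times> N2"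
      using N1(1) N2(1) by (auto simp: space_pair_measure)
  qed
qed

lemma pairing_integral:
  fixes F :: "'m \<Rightarrow> 'i::finite \<Rightarrow> 'i \<Rightarrow> complex"
  assumes "\<And>x y. integrable M (\<lambda>z. F z x y)"
  shows "pairing Y (\<lambda>x y. \<integral>z. F z x y \<partial>M) = (\<integral>z. pairing Y (F z) \<partial>M)"
  using assms by (simp add: pairing_def)

lemma pairing_integral_sandwich:
  fixes G :: "'m \<Rightarrow> 'i::finite \<Rightarrow> 'i \<Rightarrow> complex"
  assumes "prob_space M"
    and integrable: "\<And>x y. integrable M (\<lambda>z. sandwich (G z) X x y)"
    and invariant: "AE z in M. dual_sandwich (G z) Y = Y"
  shows "pairing Y (\<lambda>x y. \<integral>z. sandwich (G z) X x y \<partial>M) = pairing Y X"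
proof -
  have "pairing Y (\<lambda>x y. \<integral>z. sandwich (G z) X x y \<partial>M) = (\<integral>z. pairing Y (sandwich (G z) X) \<partial>M)"
    using integrable by (rule pairing_integral)
  also have "\<dots> = (\<integral>z. pairing Y X \<partial>M)"
  proof (rule integral_cong_AE)
    show "(\<lambda>z. pairing Y (sandwich (G z) X)) \<in> borel_measurable M"
      using integrable by (simp add: pairing_def)
    show "AE z in M. pairing Y (sandwich (G z) X) = pairing Y X"
      using invariant by eventually_elim (simp add: pairing_sandwich)
  qed simp
  also have "\<dots> = pairing Y X"
    using assms(1) by (simp add: prob_space.prob_space)
  finally show ?thesis .
qed

lemma norm_sandwich_le:
  assumes "\<And>i j. norm (G i j) \<le> 1"
  shows "norm (sandwich G X x y) \<le> (\<Sum>p\<in>UNIV. \<Sum>q\<in>UNIV. norm (X p q))"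
proof -
  have "norm (G x p * X p q * cnj (G y q)) \<le> norm (X p q)" for p q
  proof -
    have "norm (G x p * X p q * cnj (G y q)) = norm (G x p) * norm (X p q) * norm (G y q)"
      by (simp add: norm_mult)
    also have "\<dots> \<le> 1 * norm (X p q) * 1"
      using assms by (intro mult_mono) simp_all
    finally show ?thesis
      by simp
  qed
  then show ?thesis
    unfolding sandwich_def
    by (intro order_trans[OF norm_sum sum_mono] order_trans[OF norm_sum sum_mono])
qed

definition unitary_prob_measure :: "(complex^'n^'n) measure \<Rightarrow> bool" where
  "unitary_prob_measure \<mu> \<longleftrightarrow> sets \<mu> = sets borel \<and> prob_space \<mu> \<and> (AE U in \<mu>. unitary_mat U)"

lemma haar_unitary_imp_unitary_prob_measure:
  assumes "haar_unitary \<mu>"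
  shows "unitary_prob_measure \<mu>"
proof -
  have "prob_space \<mu>" "emeasure \<mu> {U. unitary_mat U} = 1"
    using assms by (simp_all add: haar_unitary_def)
  then have "AE U in \<mu>. U \<in> {U. unitary_mat U}"
    by (intro prob_space.AE_prob_1) (simp_all add: measure_def)
  then show ?thesis
    using assms by (simp add: unitary_prob_measure_def haar_unitary_def)
qed

lemma unitary_prob_measure_pair:
  assumes "unitary_prob_measure \<mu>A" "unitary_prob_measure \<mu>B"
  shows "prob_space (\<mu>A \<Otimes>\<^sub>M \<mu>B)"
    and "AE z in \<mu>A \<Otimes>\<^sub>M \<mu>B. unitary_mat (fst z) \<and> unitary_mat (snd z)"
proof -
  have A: "prob_space \<mu>A" "AE U in \<mu>A. unitary_mat U"
    and B: "prob_space \<mu>B" "AE V in \<mu>B. unitary_mat V"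
    using assms by (simp_all add: unitary_prob_measure_def)
  from A(1) B(1) show "prob_space (\<mu>A \<Otimes>\<^sub>M \<mu>B)"
    by (rule prob_space_pair)
  from prob_space_imp_sigma_finite[OF B(1)] A(2) B(2)
  show "AE z in \<mu>A \<Otimes>\<^sub>M \<mu>B. unitary_mat (fst z) \<and> unitary_mat (snd z)"
    by (rule AE_pair_measure_fst_snd)
qed

lemma twirl3_AB_eq_integral_sandwich:
  "twirl3_AB \<mu>A \<mu>B X
     = (\<lambda>x y. \<integral>z. sandwich (tensor_op (U3 (fst z)) (U3 (snd z))) X x y \<partial>(\<mu>A \<Otimes>\<^sub>M \<mu>B))"
  by (simp add: twirl3_AB_def sandwich_def tensor_op_def case_prod_beta')

lemma norm_tensor_op_U3_le_1:
  assumes "unitary_mat U" "unitary_mat V"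
  shows "norm (tensor_op (U3 U) (U3 V) i j) \<le> 1"
  unfolding tensor_op_def norm_mult by (intro mult_le_one U3_norm_le_1 norm_ge_zero assms)

lemma integrable_twirl3_AB_integrand:
  assumes "unitary_prob_measure \<mu>A" "unitary_prob_measure \<mu>B"
  shows "integrable (\<mu>A \<Otimes>\<^sub>M \<mu>B) (\<lambda>z. sandwich (tensor_op (U3 (fst z)) (U3 (snd z))) X x y)"
proof -
  interpret prob_space "\<mu>A \<Otimes>\<^sub>M \<mu>B"
    using assms by (rule unitary_prob_measure_pair)
  have "sets (\<mu>A \<Otimes>\<^sub>M \<mu>B) = sets (borel \<Otimes>\<^sub>M borel)"
    using assms by (intro sets_pair_measure_cong) (simp_all add: unitary_prob_measure_def)
  also have "\<dots> = sets borel"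
    by (simp only: borel_prod)
  finally have borel_eq: "borel_measurable (\<mu>A \<Otimes>\<^sub>M \<mu>B) = borel_measurable borel"
    by (rule measurable_cong_sets) simp
  have measurable:
    "(\<lambda>z. sandwich (tensor_op (U3 (fst z)) (U3 (snd z))) X x y) \<in> borel_measurable (\<mu>A \<Otimes>\<^sub>M \<mu>B)"
    unfolding borel_eq
    by (rule borel_measurable_continuous_onI)
      (unfold sandwich_def tensor_op_def U3_eq, intro continuous_intros)
  from unitary_prob_measure_pair(2)[OF assms] have bounded: "AE z in \<mu>A \<Otimes>\<^sub>M \<mu>B.
      norm (sandwich (tensor_op (U3 (fst z)) (U3 (snd z))) X x y) \<le> (\<Sum>p\<in>UNIV. \<Sum>q\<in>UNIV. norm (X p q))"
    by eventually_elim (rule norm_sandwich_le, rule norm_tensor_op_U3_le_1, simp_all)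
  from bounded measurable show ?thesis
    by (rule integrable_const_bound)
qed

lemma pairing_twirl3_AB:
  assumes "unitary_prob_measure \<mu>A" "unitary_prob_measure \<mu>B"
    and "\<And>U. unitary_mat U \<Longrightarrow> dual_sandwich (U3 U) P = P"
    and "\<And>V. unitary_mat V \<Longrightarrow> dual_sandwich (U3 V) Q = Q"
  shows "pairing (tensor_op P Q) (twirl3_AB \<mu>A \<mu>B X) = pairing (tensor_op P Q) X"
  unfolding twirl3_AB_eq_integral_sandwich
proof (rule pairing_integral_sandwich)
  show "prob_space (\<mu>A \<Otimes>\<^sub>M \<mu>B)"
    using assms(1,2) by (rule unitary_prob_measure_pair)
  show "integrable (\<mu>A \<Otimes>\<^sub>M \<mu>B) (\<lambda>z. sandwich (tensor_op (U3 (fst z)) (U3 (snd z))) X x y)" for x y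
    using assms(1,2) by (rule integrable_twirl3_AB_integrand)
  from unitary_prob_measure_pair(2)[OF assms(1,2)] show "AE z in \<mu>A \<Otimes>\<^sub>M \<mu>B. dual_sandwich (tensor_op (U3 (fst z)) (U3 (snd z))) (tensor_op P Q) = tensor_op P Q"
    by eventually_elim (simp add: dual_sandwich_tensor_op assms(3,4))
qed

theorem proposition2:
  fixes \<mu>A :: "(complex^'a::finite^'a) measure"
    and \<mu>B :: "(complex^'b::finite^'b) measure"
  assumes "CARD('a) \<ge> 2" and "CARD('b) \<ge> 2"
    and "haar_unitary \<mu>A" and "haar_unitary \<mu>B"
  shows "\<not> (\<exists>c :: ('a,'b) idx3 \<Rightarrow> complex.
             twirl3_AB \<mu>A \<mu>B (diag_op c) = (M_neg :: ('a,'b) idx3 \<Rightarrow> ('a,'b) idx3 \<Rightarrow> complex))"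
proof
  assume "\<exists>c :: ('a,'b) idx3 \<Rightarrow> complex. twirl3_AB \<mu>A \<mu>B (diag_op c) = M_neg"
  then obtain c :: "('a,'b) idx3 \<Rightarrow> complex" where c: "twirl3_AB \<mu>A \<mu>B (diag_op c) = M_neg"
    by blast
  let ?dA = "CARD('a)" and ?dB = "CARD('b)"
    and ?M = "M_neg :: ('a,'b) idx3 \<Rightarrow> ('a,'b) idx3 \<Rightarrow> complex"
  have twirl_invariant: "pairing (tensor_op W123 Q) (twirl3_AB \<mu>A \<mu>B X) = pairing (tensor_op W123 Q) X"
    if "Q = W123 \<or> Q = W132" for Q :: "'b \<times> 'b \<times> 'b \<Rightarrow> _" and X
    using that assms(3,4)
    by (intro pairing_twirl3_AB haar_unitary_imp_unitary_prob_measure)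
      (auto simp: dual_sandwich_U3_W123 dual_sandwich_U3_W132)
  have "pairing (tensor_op W123 W132) ?M = pairing (tensor_op W123 W132) (diag_op c)"
    using twirl_invariant[of W132 "diag_op c"] by (simp add: c)
  also have "\<dots> = pairing (tensor_op W123 W123) (diag_op c)"
    by (simp add: pairing_diag_op tensor_op_def W132_diag_eq_W123_diag)
  also have "\<dots> = pairing (tensor_op W123 W123) ?M"
    using twirl_invariant[of W123 "diag_op c"] by (simp add: c)
  finally have "of_nat (?dA ^ 3 * ?dB ^ 3 + ?dA * ?dB) / 2 = (of_nat (?dA ^ 3 * ?dB + ?dA * ?dB ^ 3) / 2 :: complex)"
    by (simp add: pairing_M_neg pairing_W_same pairing_W_cross)
  then have "?dA ^ 3 * ?dB ^ 3 + ?dA * ?dB = ?dA ^ 3 * ?dB + ?dA * ?dB ^ 3"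
    by (simp only: divide_cancel_right of_nat_eq_iff) simp
  with cube_cross_neq[OF assms(1,2)] show False
    by contradiction
qed

end
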